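(* Let $c\ge2$ and let $\Gamma$ be a $c$-uniform unoriented hypergraph with $E\neq\varnothing$, strong coloring number $\chi=\chi(\Gamma)$ and smallest normalized Laplacian eigenvalue $\lambda_1$. (1) If $\chi=c$, then $\lambda_1=0$, and $0$ is an eigenvalue of $L$ with multiplicity at least $c-1$. (2) If $\lambda_1=0$, then $\chi=\dfrac{c-\lambda_1}{1-\lambda_1}$ holds if and only if $\chi=c$.
   Context: A hypergraph here is a finite vertex set $V$, $|V|=N$, with an edge set $E\subseteq\mathcal P(V)$. It is $c$-uniform if $|e|=c$ for all $e\in E$, and unoriented means all vertex–edge incidences have orientation $+1$. The degree is $\deg v=|\{e\in E: v\in e\}|$, assumed $\ge1$ for all $v$; $D=\mathrm{diag}(\deg v)$. The adjacency matrix has $A_{v,v}=0$ and, for $v\neq w$, $A_{v,w}=-|\{e\in E: v,w\in e\}|$. The normalized Laplacian is $L=\mathrm{Id}-D^{-1}A$, with real eigenvalues $\lambda_1\le\dots\le\lambda_N$ (for such $\Gamma$ one has $\lambda_N=c$ and $0\le\lambda_1<1$). A proper strong $k$-coloring is a map $V\to\{1,\dots,k\}$ such that any two distinct vertices in a common edge receive different colors; $\chi(\Gamma)$ is the least such $k$. *)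

theory Defs
  imports "Jordan_Normal_Form.Char_Poly"
begin

text \<open>Hypergraphs on the vertex set V = {0..<N}; edges are sets of vertices.\<close>

definition hdeg :: "nat set set \<Rightarrow> nat \<Rightarrow> nat" where
  "hdeg E v = card {e \<in> E. v \<in> e}"

definition hadj :: "nat \<Rightarrow> nat set set \<Rightarrow> real mat" where
  "hadj N E = mat N N (\<lambda>(v,w). if v = w then 0
       else - real (card {e \<in> E. v \<in> e \<and> w \<in> e}))"

definition hdegmat :: "nat \<Rightarrow> nat set set \<Rightarrow> real mat" where
  "hdegmat N E = mat N N (\<lambda>(v,w). if v = w then real (hdeg E v) else 0)"

definition nlap :: "nat \<Rightarrow> nat set set \<Rightarrow> real mat" where
  "nlap N E = 1\<^sub>m N - mat N N (\<lambda>(v,w). if v = w then 1 / real (hdeg E v) else 0) * hadj N E"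

definition lambda1 :: "nat \<Rightarrow> nat set set \<Rightarrow> real" where
  "lambda1 N E = Min {x. eigenvalue (nlap N E) x}"

definition proper_strong_coloring :: "nat \<Rightarrow> nat set set \<Rightarrow> nat \<Rightarrow> (nat \<Rightarrow> nat) \<Rightarrow> bool" where
  "proper_strong_coloring N E k f \<longleftrightarrow>
     (\<forall>v<N. f v \<in> {1..k}) \<and> (\<forall>e\<in>E. \<forall>v\<in>e. \<forall>w\<in>e. v \<noteq> w \<longrightarrow> f v \<noteq> f w)"

definition strong_chromatic :: "nat \<Rightarrow> nat set set \<Rightarrow> nat" where
  "strong_chromatic N E = (LEAST k. \<exists>f. proper_strong_coloring N E k f)"

definition uniform_hypergraph :: "nat \<Rightarrow> nat set set \<Rightarrow> nat \<Rightarrow> bool" where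
  "uniform_hypergraph N E c \<longleftrightarrow>
     E \<subseteq> Pow {0..<N} \<and> (\<forall>e\<in>E. card e = c) \<and> (\<forall>v<N. hdeg E v \<ge> 1)"

end

theory Submission imports Defs begin

text \<open>A strong colouring f with c colours makes every edge of a c-uniform hypergraph rainbow:
each edge meets every colour class exactly once. Since deg v * (L x)_v is the sum, over the
edges e containing v, of the sum of x over e, every vector summing to zero on each edge lies in
the kernel of L; in particular so do the c - 1 differences 1_{f = i} - 1_{f = c}, i < c, of
colour class indicators. On the vertices of one edge with colours below c these vectors form an
identity block, so a unipotent change of basis turns L into a similar matrix with c - 1 zero
columns, and x^(c-1) divides the characteristic polynomial. The identity
sum_v deg v * x_v * (L x)_v = sum_e (sum of x over e)^2 shows that all eigenvalues are
nonnegative, hence lambda_1 = 0. Part (2) is then immediate: for lambda_1 = 0 the formula reads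
chi = c.\<close>

lemma x_pow_card_dvd_char_poly_if_zero_cols:
  fixes A :: "'a::idom mat"
  assumes A: "A \<in> carrier_mat n n" and S: "S \<subseteq> {0..<n}"
    and zero: "\<And>i j. i \<in> S \<Longrightarrow> j < n \<Longrightarrow> A $$ (j, i) = 0"
  shows "[:0, 1:] ^ card S dvd char_poly A"
proof -
  \<comment> \<open>In the Leibniz expansion, a permutation moving a point of S picks a zero entry from a column
    in S; one fixing S picks the factor x at each point of S.\<close>
  let ?C = "char_poly_matrix (transpose_mat A)"
  have C: "?C \<in> carrier_mat n n" using A by simp
  have "char_poly A = char_poly (transpose_mat A)" using A by simp
  also have "\<dots> = (\<Sum>p | p permutes {0..<n}. signof p * (\<Prod>i = 0..<n. ?C $$ (i, p i)))"
    unfolding char_poly_def by (rule det_def'[OF C])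
  also have "[:0, 1:] ^ card S dvd \<dots>"
  proof (rule dvd_sum)
    fix p assume "p \<in> {p. p permutes {0..<n}}"
    then have p: "p permutes {0..<n}" by simp
    have "(\<Prod>i = 0..<n. ?C $$ (i, p i)) = (\<Prod>i\<in>S. ?C $$ (i, p i)) * (\<Prod>i\<in>{0..<n} - S. ?C $$ (i, p i))"
      using prod.subset_diff[OF S] by (simp add: mult.commute)
    moreover have "(\<Prod>i\<in>S. ?C $$ (i, p i)) = (\<Prod>i\<in>S. if p i = i then [:0, 1:] else 0)"
      using S A zero permutes_in_image[OF p]
      by (intro prod.cong) (auto simp: char_poly_matrix_def subset_iff)
    moreover have "[:0, 1:] ^ card S dvd (\<Prod>i\<in>S. if p i = i then [:0, 1:] else 0 :: 'a poly)"
    proof (cases "\<forall>i\<in>S. p i = i")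
      case False
      then show ?thesis using finite_subset[OF S] by (subst prod_zero) auto
    qed simp
    ultimately show "[:0, 1:] ^ card S dvd signof p * (\<Prod>i = 0..<n. ?C $$ (i, p i))"
      by (simp add: dvd_mult dvd_mult2)
  qed
  finally show ?thesis .
qed

lemma one_plus_minus_mat_inverse_if_square_zero:
  fixes M :: "'a::comm_ring_1 mat"
  assumes M: "M \<in> carrier_mat n n" and MM: "M * M = 0\<^sub>m n n"
  shows "(1\<^sub>m n + M) * (1\<^sub>m n - M) = 1\<^sub>m n" and "(1\<^sub>m n - M) * (1\<^sub>m n + M) = 1\<^sub>m n"
proof -
  have "(1\<^sub>m n + M) * (1\<^sub>m n - M) = (1\<^sub>m n + M) * 1\<^sub>m n - (1\<^sub>m n + M) * M"
    by (rule mult_minus_distrib_mat) (use M in auto)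
  also have "(1\<^sub>m n + M) * M = 1\<^sub>m n * M + M * M"
    by (rule add_mult_distrib_mat) (use M in auto)
  finally show "(1\<^sub>m n + M) * (1\<^sub>m n - M) = 1\<^sub>m n"
    unfolding MM using M by (intro eq_matI) auto
  have "(1\<^sub>m n - M) * (1\<^sub>m n + M) = (1\<^sub>m n - M) * 1\<^sub>m n + (1\<^sub>m n - M) * M"
    by (rule mult_add_distrib_mat) (use M in auto)
  also have "(1\<^sub>m n - M) * M = 1\<^sub>m n * M - M * M"
    by (rule minus_mult_distrib_mat) (use M in auto)
  finally show "(1\<^sub>m n - M) * (1\<^sub>m n + M) = 1\<^sub>m n"
    unfolding MM using M by (intro eq_matI) auto
qed

lemma x_pow_card_dvd_char_poly_if_kernel_block:
  fixes L :: "'a::idom mat"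
  assumes L: "L \<in> carrier_mat n n" and R: "R \<subseteq> {0..<n}"
    and u: "\<And>r. r \<in> R \<Longrightarrow> u r \<in> carrier_vec n"
    and ker: "\<And>r. r \<in> R \<Longrightarrow> L *\<^sub>v u r = 0\<^sub>v n"
    and unit: "\<And>r r'. r \<in> R \<Longrightarrow> r' \<in> R \<Longrightarrow> u r $ r' = (if r' = r then 1 else 0)"
  shows "[:0, 1:] ^ card R dvd char_poly L"
proof -
  \<comment> \<open>The columns of P indexed by R are the kernel vectors u r, so those of
    Q L P = P^-1 L P vanish.\<close>
  define M where "M = mat n n (\<lambda>(i, r). if r \<in> R \<and> i \<notin> R then u r $ i else 0)"
  define P where "P = 1\<^sub>m n + M"
  define Q where "Q = 1\<^sub>m n - M"
  have M: "M \<in> carrier_mat n n" and P: "P \<in> carrier_mat n n" and Q: "Q \<in> carrier_mat n n"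
    unfolding M_def P_def Q_def by auto
  have "M * M = 0\<^sub>m n n"
    using M by (intro eq_matI) (auto simp: M_def scalar_prod_def intro!: sum.neutral)
  then have PQ: "P * Q = 1\<^sub>m n" and QP: "Q * P = 1\<^sub>m n"
    unfolding P_def Q_def using one_plus_minus_mat_inverse_if_square_zero[OF M] by auto
  define B where "B = Q * (L * P)"
  have B: "B \<in> carrier_mat n n" unfolding B_def using Q L P by simp
  have "P * B * Q = (P * Q) * L * (P * Q)"
    unfolding B_def using P Q L by (simp add: assoc_mult_mat[of _ n n _ n _ n])
  then have "L = P * B * Q" unfolding PQ using L by simp
  then have "similar_mat L B" using L B P Q by (intro similar_matI[OF _ PQ QP]) auto
  moreover have "B $$ (j, r) = 0" if r: "r \<in> R" and j: "j < n" for r j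
  proof -
    have rn: "r < n" using r R by auto
    have "col P r = u r"
      using u[OF r] unit[OF r] rn r M by (intro eq_vecI) (auto simp: P_def M_def)
    then have "col (L * P) r = 0\<^sub>v n"
      unfolding col_mult2[OF L P rn] using ker[OF r] by simp
    then show ?thesis unfolding B_def using Q L P j rn by simp
  qed
  ultimately show ?thesis
    using x_pow_card_dvd_char_poly_if_zero_cols[OF B R] char_poly_similar by metis
qed

lemma nlap_carrier_mat [simp]: "nlap N E \<in> carrier_mat N N"
  unfolding nlap_def hadj_def by auto

lemma dim_row_nlap [simp]: "dim_row (nlap N E) = N"
  and dim_col_nlap [simp]: "dim_col (nlap N E) = N"
  using carrier_matD[OF nlap_carrier_mat[of N E]] by auto

lemma nlap_index:
  assumes "v < N" and "w < N"
  shows "nlap N E $$ (v, w) = (if v = w then 1 else 0) - hadj N E $$ (v, w) / real (hdeg E v)"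
proof -
  have "(\<Sum>k = 0..<N. (if v = k then 1 / real (hdeg E v) else 0) * hadj N E $$ (k, w))
      = (\<Sum>k = 0..<N. if v = k then hadj N E $$ (k, w) / real (hdeg E v) else 0)"
    by (intro sum.cong) auto
  then show ?thesis
    using assms by (simp add: nlap_def hadj_def scalar_prod_def)
qed

lemma hdeg_mult_nlap_mult_vec_index:
  assumes E: "E \<subseteq> Pow {0..<N}" and v: "v < N" and deg: "hdeg E v \<noteq> 0"
    and x: "x \<in> carrier_vec N"
  shows "real (hdeg E v) * (nlap N E *\<^sub>v x) $ v = (\<Sum>e | e \<in> E \<and> v \<in> e. \<Sum>w\<in>e. x $ w)"
proof -
  let ?Ev = "{e \<in> E. v \<in> e}"
  have fin: "finite ?Ev" using E by (simp add: finite_subset)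
  have "(\<Sum>e\<in>?Ev. \<Sum>w\<in>e. x $ w) = (\<Sum>e\<in>?Ev. \<Sum>w = 0..<N. if w \<in> e then x $ w else 0)"
  proof (rule sum.cong[OF refl])
    fix e assume "e \<in> ?Ev"
    then have "{0..<N} \<inter> e = e" using E by auto
    then show "(\<Sum>w\<in>e. x $ w) = (\<Sum>w = 0..<N. if w \<in> e then x $ w else 0)"
      using sum.inter_restrict[of "{0..<N}" "\<lambda>w. x $ w" e] by simp
  qed
  also have "\<dots> = (\<Sum>w = 0..<N. \<Sum>e\<in>?Ev. if w \<in> e then x $ w else 0)"
    by (rule sum.swap)
  also have "\<dots> = (\<Sum>w = 0..<N. real (card {e \<in> E. v \<in> e \<and> w \<in> e}) * x $ w)"
  proof (rule sum.cong[OF refl])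
    fix w
    have "{e \<in> ?Ev. w \<in> e} = {e \<in> E. v \<in> e \<and> w \<in> e}" by blast
    then show "(\<Sum>e\<in>?Ev. if w \<in> e then x $ w else 0) = real (card {e \<in> E. v \<in> e \<and> w \<in> e}) * x $ w"
      using sum.inter_filter[OF fin, of "\<lambda>_. x $ w" "\<lambda>e. w \<in> e"] by simp
  qed
  also have "\<dots> = (\<Sum>w = 0..<N. real (hdeg E v) * ((if v = w then 1 else 0) - hadj N E $$ (v, w) / real (hdeg E v)) * x $ w)"
  proof (rule sum.cong[OF refl])
    fix w assume "w \<in> {0..<N}"
    then show "real (card {e \<in> E. v \<in> e \<and> w \<in> e}) * x $ w
      = real (hdeg E v) * ((if v = w then 1 else 0) - hadj N E $$ (v, w) / real (hdeg E v)) * x $ w"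
      using v deg by (cases "v = w") (simp_all add: hadj_def hdeg_def)
  qed
  also have "\<dots> = real (hdeg E v) * (\<Sum>w = 0..<N. nlap N E $$ (v, w) * x $ w)"
    using v by (simp add: nlap_index sum_distrib_left mult.assoc)
  also have "\<dots> = real (hdeg E v) * (nlap N E *\<^sub>v x) $ v"
    using v x by (simp add: scalar_prod_def)
  finally show ?thesis by simp
qed

lemma nlap_quadratic_form:
  assumes E: "E \<subseteq> Pow {0..<N}" and deg: "\<And>v. v < N \<Longrightarrow> hdeg E v \<noteq> 0"
    and x: "x \<in> carrier_vec N"
  shows "(\<Sum>v = 0..<N. real (hdeg E v) * x $ v * (nlap N E *\<^sub>v x) $ v) = (\<Sum>e\<in>E. (\<Sum>w\<in>e. x $ w)\<^sup>2)"
proof -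
  define s where "s e = (\<Sum>w\<in>e. x $ w)" for e
  have fin: "finite E" using E by (simp add: finite_subset)
  have "(\<Sum>v = 0..<N. real (hdeg E v) * x $ v * (nlap N E *\<^sub>v x) $ v)
      = (\<Sum>v = 0..<N. x $ v * (\<Sum>e | e \<in> E \<and> v \<in> e. s e))"
    using hdeg_mult_nlap_mult_vec_index[OF E _ deg x] by (intro sum.cong) (auto simp: s_def)
  also have "\<dots> = (\<Sum>v = 0..<N. \<Sum>e\<in>E. if v \<in> e then x $ v * s e else 0)"
    using fin by (simp add: sum_distrib_left sum.inter_filter if_distrib cong: if_cong)
  also have "\<dots> = (\<Sum>e\<in>E. \<Sum>v = 0..<N. if v \<in> e then x $ v * s e else 0)"
    by (rule sum.swap)
  also have "\<dots> = (\<Sum>e\<in>E. s e ^ 2)"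
  proof (rule sum.cong[OF refl])
    fix e assume "e \<in> E"
    then have "{0..<N} \<inter> e = e" using E by auto
    then show "(\<Sum>v = 0..<N. if v \<in> e then x $ v * s e else 0) = s e ^ 2"
      using sum.inter_restrict[of "{0..<N}" "\<lambda>w. x $ w * s e" e]
      by (simp add: s_def sum_distrib_right power2_eq_square)
  qed
  finally show ?thesis by (simp add: s_def)
qed

lemma nlap_eigenvalue_nonneg:
  assumes E: "E \<subseteq> Pow {0..<N}" and deg: "\<And>v. v < N \<Longrightarrow> hdeg E v \<noteq> 0"
    and ev: "eigenvalue (nlap N E) \<mu>"
  shows "0 \<le> \<mu>"
proof -
  obtain x where x: "x \<in> carrier_vec N" and "x \<noteq> 0\<^sub>v N" and Lx: "nlap N E *\<^sub>v x = \<mu> \<cdot>\<^sub>v x"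
    using ev unfolding eigenvalue_def eigenvector_def by auto
  have "\<exists>i<N. x $ i \<noteq> 0"
  proof (rule ccontr)
    assume "\<not> (\<exists>i<N. x $ i \<noteq> 0)"
    then have "x = 0\<^sub>v N" using x by (intro eq_vecI) auto
    with \<open>x \<noteq> 0\<^sub>v N\<close> show False ..
  qed
  then obtain i where i: "i < N" "x $ i \<noteq> 0" by blast
  have "0 \<le> (\<Sum>e\<in>E. (\<Sum>w\<in>e. x $ w)\<^sup>2)" by (simp add: sum_nonneg)
  also have "\<dots> = (\<Sum>v = 0..<N. real (hdeg E v) * x $ v * (nlap N E *\<^sub>v x) $ v)"
    by (rule nlap_quadratic_form[OF E deg x, symmetric])
  also have "\<dots> = \<mu> * (\<Sum>v = 0..<N. real (hdeg E v) * (x $ v)\<^sup>2)"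
    unfolding Lx sum_distrib_left using x by (intro sum.cong refl) (simp add: power2_eq_square)
  finally have "0 \<le> \<mu> * (\<Sum>v = 0..<N. real (hdeg E v) * (x $ v)\<^sup>2)" .
  moreover have "0 < (\<Sum>v = 0..<N. real (hdeg E v) * (x $ v)\<^sup>2)"
    using i deg by (intro sum_pos2[of _ i]) auto
  ultimately show ?thesis by (simp add: zero_le_mult_iff)
qed

lemma lambda1_eq_0_if_eigenvalue_0:
  assumes E: "E \<subseteq> Pow {0..<N}" and deg: "\<And>v. v < N \<Longrightarrow> hdeg E v \<noteq> 0"
    and ev: "eigenvalue (nlap N E) 0"
  shows "lambda1 N E = 0"
proof -
  have "char_poly (nlap N E) \<noteq> 0"
    using degree_monic_char_poly[OF nlap_carrier_mat[of N E]] by auto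
  then have "finite {x. eigenvalue (nlap N E) x}"
    by (simp add: eigenvalue_root_char_poly[OF nlap_carrier_mat] poly_roots_finite)
  then show ?thesis
    unfolding lambda1_def by (rule Min_eqI) (use nlap_eigenvalue_nonneg[OF E deg] ev in auto)
qed

lemma nlap_mult_vec_eq_0_if_edge_sums_0:
  assumes E: "E \<subseteq> Pow {0..<N}" and deg: "\<And>v. v < N \<Longrightarrow> hdeg E v \<noteq> 0"
    and x: "x \<in> carrier_vec N" and sums: "\<And>e. e \<in> E \<Longrightarrow> (\<Sum>w\<in>e. x $ w) = 0"
  shows "nlap N E *\<^sub>v x = 0\<^sub>v N"
proof (rule eq_vecI)
  fix v assume "v < dim_vec (0\<^sub>v N :: real vec)"
  then have v: "v < N" by simp
  have "real (hdeg E v) * (nlap N E *\<^sub>v x) $ v = 0"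
    using hdeg_mult_nlap_mult_vec_index[OF E v deg[OF v] x] sums by simp
  then show "(nlap N E *\<^sub>v x) $ v = 0\<^sub>v N $ v" using deg[OF v] v by simp
qed simp

lemma strong_chromatic_coloring_exists:
  assumes "E \<subseteq> Pow {0..<N}"
  shows "\<exists>f. proper_strong_coloring N E (strong_chromatic N E) f"
proof -
  have "proper_strong_coloring N E N Suc"
    using assms by (auto simp: proper_strong_coloring_def)
  then show ?thesis
    unfolding strong_chromatic_def by (intro LeastI_ex[of "\<lambda>k. \<exists>f. proper_strong_coloring N E k f"]) blast
qed

lemma proper_strong_coloring_inj_on_edge:
  assumes "proper_strong_coloring N E k f" and "e \<in> E"
  shows "inj_on f e"
  using assms unfolding proper_strong_coloring_def inj_on_def by metis

lemma proper_strong_coloring_image_edge: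
  assumes f: "proper_strong_coloring N E c f" and E: "E \<subseteq> Pow {0..<N}"
    and e: "e \<in> E" and card: "card e = c"
  shows "f ` e = {1..c}"
proof (rule card_subset_eq)
  have "e \<subseteq> {0..<N}" using E e by auto
  then show "f ` e \<subseteq> {1..c}" using f by (auto simp: proper_strong_coloring_def)
  show "card (f ` e) = card {1..c}"
    using card_image[OF proper_strong_coloring_inj_on_edge[OF f e]] card by simp
qed simp

definition colour_diff_vec :: "nat \<Rightarrow> (nat \<Rightarrow> nat) \<Rightarrow> nat \<Rightarrow> nat \<Rightarrow> real vec" where
  "colour_diff_vec N f i j = vec N (\<lambda>v. if f v = i then 1 else if f v = j then -1 else 0)"

lemma nlap_mult_colour_diff_vec:
  assumes G: "uniform_hypergraph N E c" and f: "proper_strong_coloring N E c f"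
    and ij: "i \<in> {1..c}" "j \<in> {1..c}" "i \<noteq> j"
  shows "nlap N E *\<^sub>v colour_diff_vec N f i j = 0\<^sub>v N"
proof (rule nlap_mult_vec_eq_0_if_edge_sums_0)
  show E: "E \<subseteq> Pow {0..<N}" and "\<And>v. v < N \<Longrightarrow> hdeg E v \<noteq> 0"
    using G by (auto simp: uniform_hypergraph_def not_one_le_zero)
  show "colour_diff_vec N f i j \<in> carrier_vec N" by (simp add: colour_diff_vec_def)
  fix e assume e: "e \<in> E"
  define g where "g k = (if k = i then 1 else 0) - (if k = j then 1 else 0 :: real)" for k
  have "e \<subseteq> {0..<N}" using E e by auto
  then have "(\<Sum>w\<in>e. colour_diff_vec N f i j $ w) = (\<Sum>w\<in>e. g (f w))"
    using ij by (intro sum.cong refl) (auto simp: colour_diff_vec_def g_def)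
  also have "\<dots> = (\<Sum>k\<in>f ` e. g k)"
    by (simp add: sum.reindex[OF proper_strong_coloring_inj_on_edge[OF f e]])
  also have "f ` e = {1..c}"
    using proper_strong_coloring_image_edge[OF f E e] G e by (simp add: uniform_hypergraph_def)
  also have "(\<Sum>k\<in>{1..c}. g k) = 0"
    using ij by (simp add: g_def sum_subtractf)
  finally show "(\<Sum>w\<in>e. colour_diff_vec N f i j $ w) = 0" .
qed

lemma order_0_char_poly_nlap_ge_if_coloring:
  assumes G: "uniform_hypergraph N E c" and "E \<noteq> {}"
    and f: "proper_strong_coloring N E c f"
  shows "c - 1 \<le> order 0 (char_poly (nlap N E))"
proof -
  have E: "E \<subseteq> Pow {0..<N}" and card: "\<And>e. e \<in> E \<Longrightarrow> card e = c"
    using G by (auto simp: uniform_hypergraph_def)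
  obtain e0 where e0: "e0 \<in> E" using \<open>E \<noteq> {}\<close> by auto
  have e0N: "e0 \<subseteq> {0..<N}" using E e0 by auto
  have inj: "inj_on f e0" by (rule proper_strong_coloring_inj_on_edge[OF f e0])
  have rainbow: "f ` e0 = {1..c}" by (rule proper_strong_coloring_image_edge[OF f E e0 card[OF e0]])
  define R where "R = {r \<in> e0. f r < c}"
  define u where "u r = colour_diff_vec N f (f r) c" for r
  have R: "R \<subseteq> {0..<N}" using e0N by (auto simp: R_def)
  have "f ` R = {i \<in> f ` e0. i < c}" by (auto simp: R_def)
  also have "\<dots> = {1..<c}" using rainbow by auto
  finally have "f ` R = {1..<c}" .
  moreover have "inj_on f R" using inj by (rule inj_on_subset) (auto simp: R_def)
  ultimately have card_R: "card R = c - 1" using card_image by fastforce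
  have "[:0, 1:] ^ card R dvd char_poly (nlap N E)"
  proof (rule x_pow_card_dvd_char_poly_if_kernel_block[OF nlap_carrier_mat R])
    fix r assume r: "r \<in> R"
    then have "f r \<in> {1..c}" "f r \<noteq> c" using rainbow by (auto simp: R_def)
    then show "nlap N E *\<^sub>v u r = 0\<^sub>v N"
      unfolding u_def using nlap_mult_colour_diff_vec[OF G f, of "f r" c] by auto
    show "u r \<in> carrier_vec N" by (simp add: u_def colour_diff_vec_def)
    fix r' assume r': "r' \<in> R"
    have "f r' = f r \<longleftrightarrow> r' = r" using inj r r' by (auto simp: R_def inj_on_def)
    then show "u r $ r' = (if r' = r then 1 else 0)"
      using r r' R by (auto simp: u_def colour_diff_vec_def R_def)
  qed
  moreover have "char_poly (nlap N E) \<noteq> 0"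
    using degree_monic_char_poly[OF nlap_carrier_mat[of N E]] by auto
  ultimately show ?thesis
    using order_divides[of 0 "card R" "char_poly (nlap N E)"] card_R by simp
qed

theorem mainTheorem4:
  fixes N c :: nat and E :: "nat set set"
  assumes "c \<ge> 2"
    and "uniform_hypergraph N E c"
    and "E \<noteq> {}"
  shows "(strong_chromatic N E = c \<longrightarrow>
            lambda1 N E = 0 \<and> eigenvalue (nlap N E) 0 \<and>
            order 0 (char_poly (nlap N E)) \<ge> c - 1)
       \<and> (lambda1 N E = 0 \<longrightarrow>
            (real (strong_chromatic N E) = (real c - lambda1 N E) / (1 - lambda1 N E)
             \<longleftrightarrow> strong_chromatic N E = c))"
proof (intro conjI impI)
  assume chi: "strong_chromatic N E = c"
  have E: "E \<subseteq> Pow {0..<N}" and deg: "\<And>v. v < N \<Longrightarrow> hdeg E v \<noteq> 0"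
    using assms(2) by (auto simp: uniform_hypergraph_def not_one_le_zero)
  obtain f where "proper_strong_coloring N E c f"
    using strong_chromatic_coloring_exists[OF E] chi by auto
  then show "c - 1 \<le> order 0 (char_poly (nlap N E))"
    by (rule order_0_char_poly_nlap_ge_if_coloring[OF assms(2,3)])
  with assms(1) have "0 < order 0 (char_poly (nlap N E))" by linarith
  then have "poly (char_poly (nlap N E)) 0 = 0"
    by (simp add: order_root del: poly_0)
  then show ev: "eigenvalue (nlap N E) 0"
    by (simp add: eigenvalue_root_char_poly[OF nlap_carrier_mat])
  show "lambda1 N E = 0" by (rule lambda1_eq_0_if_eigenvalue_0[OF E deg ev])
next
  assume "lambda1 N E = 0"
  then show "real (strong_chromatic N E) = (real c - lambda1 N E) / (1 - lambda1 N E)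
      \<longleftrightarrow> strong_chromatic N E = c"
    by simp
qed

end
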